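(* Let $\mathbf{L}$ be a distributive lattice, $n\ge1$ an integer, $F$ an $n$-filter on $\mathbf{L}$ and $I$ an ideal of $\mathbf{L}$ with $F\cap I=\emptyset$. Then there is a prime $n$-filter $G\supseteq F$ on $\mathbf{L}$ with $G\cap I=\emptyset$.
   Context: For a set $X$, $Y\subseteq_n X$ means $Y$ is a non-empty subset of $X$ with $|Y|\le n$. An $n$-filter on a lattice is an upset $F$ such that for every non-empty finite $X\subseteq F$: if $\bigwedge Y\in F$ for every $Y\subseteq_n X$ then $\bigwedge X\in F$. A prime $n$-filter is an $n$-filter $F$ such that $a\vee b\in F$ implies $a\in F$ or $b\in F$. An ideal is a downset closed under binary joins (possibly empty). *)

theory Defs
  imports Main
begin

definition subset_n :: "'a set \<Rightarrow> nat \<Rightarrow> 'a set \<Rightarrow> bool" where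
  "subset_n Y n X \<longleftrightarrow> Y \<subseteq> X \<and> Y \<noteq> {} \<and> finite Y \<and> card Y \<le> n"

definition upset :: "'a::order set \<Rightarrow> bool" where
  "upset F \<longleftrightarrow> (\<forall>a b. a \<in> F \<longrightarrow> a \<le> b \<longrightarrow> b \<in> F)"

definition downset :: "'a::order set \<Rightarrow> bool" where
  "downset I \<longleftrightarrow> (\<forall>a b. a \<in> I \<longrightarrow> b \<le> a \<longrightarrow> b \<in> I)"

definition n_filter :: "nat \<Rightarrow> 'a::lattice set \<Rightarrow> bool" where
  "n_filter n F \<longleftrightarrow> upset F \<and>
     (\<forall>X. finite X \<and> X \<noteq> {} \<and> X \<subseteq> F \<longrightarrow>
        (\<forall>Y. subset_n Y n X \<longrightarrow> Inf_fin Y \<in> F) \<longrightarrow> Inf_fin X \<in> F)"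

definition prime_n_filter :: "nat \<Rightarrow> 'a::lattice set \<Rightarrow> bool" where
  "prime_n_filter n F \<longleftrightarrow> n_filter n F \<and>
     (\<forall>a b. sup a b \<in> F \<longrightarrow> a \<in> F \<or> b \<in> F)"

definition lattice_ideal :: "'a::lattice set \<Rightarrow> bool" where
  "lattice_ideal I \<longleftrightarrow> downset I \<and> (\<forall>a b. a \<in> I \<longrightarrow> b \<in> I \<longrightarrow> sup a b \<in> I)"

end

theory Submission
  imports Defs
begin

text \<open>Take an ideal J maximal among those containing I and disjoint from F (Zorn); its complement
  G is a prime upset containing F. Maximality means that every x outside J escapes into F after
  a join with some element of J, and finitely many such escapes share a common witness j. By
  distributivity the set of a with a \<squnion> j \<in> F is again an n-filter; applying this to a finite
  X \<subseteq> G whose n-element meets avoid J puts \<Sqinter>X \<squnion> j in F, so \<Sqinter>X \<notin> J.\<close>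

lemma sup_Inf_fin_distrib:
  fixes Y :: "'a::distrib_lattice set"
  assumes "finite Y" "Y \<noteq> {}"
  shows "sup (Inf_fin Y) j = Inf_fin ((\<lambda>y. sup y j) ` Y)"
  using assms
  by (induction Y rule: finite_ne_induct) (simp_all add: sup_inf_distrib2)

lemma n_filter_sup_preimage:
  fixes F :: "'a::distrib_lattice set"
  assumes "n_filter n F"
  shows "n_filter n {a. sup a j \<in> F}"
  unfolding n_filter_def
proof (intro conjI allI impI)
  have F_up: "upset F" using assms by (simp add: n_filter_def)
  then show "upset {a. sup a j \<in> F}"
    unfolding upset_def by (blast intro: sup_mono)
  fix X assume X: "finite X \<and> X \<noteq> {} \<and> X \<subseteq> {a. sup a j \<in> F}"
    and meets: "\<forall>Y. subset_n Y n X \<longrightarrow> Inf_fin Y \<in> {a. sup a j \<in> F}"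
  define f where "f y = sup y j" for y
  have "\<forall>Y'. subset_n Y' n (f ` X) \<longrightarrow> Inf_fin Y' \<in> F"
  proof (intro allI impI)
    fix Y' assume Y': "subset_n Y' n (f ` X)"
    then obtain U where U: "U \<subseteq> X" "inj_on f U" "Y' = f ` U"
      by (auto simp: subset_n_def subset_image_inj)
    then have "finite U" "U \<noteq> {}" "card U = card Y'"
      using X Y' finite_subset by (auto simp: subset_n_def card_image)
    with U Y' have "subset_n U n X" by (simp add: subset_n_def)
    with meets \<open>finite U\<close> \<open>U \<noteq> {}\<close> show "Inf_fin Y' \<in> F"
      by (simp add: U(3) f_def sup_Inf_fin_distrib[symmetric])
  qed
  with assms X have "Inf_fin (f ` X) \<in> F" unfolding n_filter_def by (auto simp: f_def)
  with X show "Inf_fin X \<in> {a. sup a j \<in> F}" by (simp add: f_def sup_Inf_fin_distrib)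
qed

lemma lattice_ideal_Union_chain:
  assumes "\<And>J. J \<in> C \<Longrightarrow> lattice_ideal J" and "subset.chain UNIV C"
  shows "lattice_ideal (\<Union>C)"
  unfolding lattice_ideal_def downset_def
proof safe
  fix a b J assume "J \<in> C" "a \<in> J" "b \<le> a"
  with assms(1) show "b \<in> \<Union>C" by (auto simp: lattice_ideal_def downset_def)
next
  fix a b J K assume JK: "J \<in> C" "a \<in> J" "K \<in> C" "b \<in> K"
  with assms(2) have "J \<subseteq> K \<or> K \<subseteq> J" by (auto simp: pred_on.chain_def)
  with JK assms(1) have "sup a b \<in> J \<or> sup a b \<in> K" by (auto simp: lattice_ideal_def)
  with JK show "sup a b \<in> \<Union>C" by blast
qed

lemma lattice_ideal_sup_extension:
  assumes "lattice_ideal J"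
  shows "lattice_ideal {y. \<exists>j\<in>J. y \<le> sup x j}"
  unfolding lattice_ideal_def downset_def
proof safe
  fix a b j assume "j \<in> J" "a \<le> sup x j" "b \<le> a"
  then show "\<exists>j\<in>J. b \<le> sup x j" by (meson order_trans)
next
  fix a b j k assume "j \<in> J" "a \<le> sup x j" "k \<in> J" "b \<le> sup x k"
  moreover have "sup x j \<le> sup x (sup j k)" "sup x k \<le> sup x (sup j k)"
    by (simp_all add: sup.coboundedI2)
  ultimately have "sup a b \<le> sup x (sup j k)" "sup j k \<in> J"
    using assms by (auto simp: lattice_ideal_def intro: order_trans)
  then show "\<exists>j\<in>J. sup a b \<le> sup x j" by blast
qed

lemma maximal_disjoint_ideal_exists:
  assumes "lattice_ideal I" "I \<inter> F = {}"
  obtains J where "lattice_ideal J" "I \<subseteq> J" "J \<inter> F = {}"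
    and "\<And>K. lattice_ideal K \<Longrightarrow> J \<subseteq> K \<Longrightarrow> K \<inter> F = {} \<Longrightarrow> K = J"
proof -
  define A where "A = {J. lattice_ideal J \<and> I \<subseteq> J \<and> J \<inter> F = {}}"
  have "\<exists>M\<in>A. \<forall>K\<in>A. M \<subseteq> K \<longrightarrow> K = M"
  proof (rule subset_Zorn_nonempty)
    show "A \<noteq> {}" using assms by (auto simp: A_def)
  next
    fix C assume "C \<noteq> {}" "subset.chain A C"
    moreover from this have "subset.chain UNIV C" by (auto simp: pred_on.chain_def)
    ultimately show "\<Union>C \<in> A"
      using lattice_ideal_Union_chain[of C] by (auto simp: A_def pred_on.chain_def)
  qed
  then show thesis using that by (auto simp: A_def)
qed

lemma maximal_disjoint_ideal_escape:
  assumes "upset F" "lattice_ideal J" "J \<inter> F = {}"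
    and maximal: "\<And>K. lattice_ideal K \<Longrightarrow> J \<subseteq> K \<Longrightarrow> K \<inter> F = {} \<Longrightarrow> K = J"
    and "J \<noteq> {}" "x \<notin> J"
  shows "\<exists>j\<in>J. sup x j \<in> F"
proof -
  define K where "K = {y. \<exists>j\<in>J. y \<le> sup x j}"
  have "lattice_ideal K" unfolding K_def using assms(2) by (rule lattice_ideal_sup_extension)
  moreover have "J \<subseteq> K" "x \<in> K" using \<open>J \<noteq> {}\<close> by (auto simp: K_def intro: le_supI2)
  ultimately have "K \<inter> F \<noteq> {}" using maximal \<open>x \<notin> J\<close> by blast
  then obtain z j where "z \<in> F" "j \<in> J" "z \<le> sup x j" by (auto simp: K_def)
  with \<open>upset F\<close> show ?thesis by (auto simp: upset_def)
qed

lemma common_escape_witness: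
  assumes "upset F" "lattice_ideal J" "J \<noteq> {}"
    and escape: "\<And>x. x \<notin> J \<Longrightarrow> \<exists>j\<in>J. sup x j \<in> F"
    and "finite A" "A \<inter> J = {}"
  shows "\<exists>j\<in>J. \<forall>a\<in>A. sup a j \<in> F"
  using assms(5,6)
proof (induction A rule: finite_induct)
  case empty
  then show ?case using \<open>J \<noteq> {}\<close> by blast
next
  case (insert a A)
  then obtain j k where "j \<in> J" "\<forall>b\<in>A. sup b j \<in> F" "k \<in> J" "sup a k \<in> F"
    using escape by blast
  moreover have "sup b j \<le> sup b (sup j k)" "sup b k \<le> sup b (sup j k)" for b
    by (simp_all add: sup.coboundedI2)
  ultimately show ?case
    using \<open>upset F\<close> \<open>lattice_ideal J\<close> unfolding upset_def lattice_ideal_def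
    by (metis insert_iff)
qed

lemma n_filter_Compl_ideal:
  fixes F :: "'a::distrib_lattice set"
  assumes "n_filter n F" "lattice_ideal J" "J \<inter> F = {}" "J \<noteq> {}"
    and escape: "\<And>x. x \<notin> J \<Longrightarrow> \<exists>j\<in>J. sup x j \<in> F"
  shows "n_filter n (- J)"
  unfolding n_filter_def
proof (intro conjI allI impI)
  show "upset (- J)"
    using assms(2) by (auto simp: upset_def lattice_ideal_def downset_def)
  fix X assume X: "finite X \<and> X \<noteq> {} \<and> X \<subseteq> - J"
    and meets: "\<forall>Y. subset_n Y n X \<longrightarrow> Inf_fin Y \<in> - J"
  define S where "S = {Y. subset_n Y n X}"
  have "finite S"
    using X by (auto simp: S_def subset_n_def intro: finite_subset[of _ "Pow X"])
  then have "finite (X \<union> Inf_fin ` S)" using X by simp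
  moreover have "(X \<union> Inf_fin ` S) \<inter> J = {}" using X meets by (auto simp: S_def)
  moreover have "upset F" using assms(1) by (simp add: n_filter_def)
  ultimately obtain j where "j \<in> J" and j: "\<forall>a\<in>X \<union> Inf_fin ` S. sup a j \<in> F"
    using common_escape_witness[OF _ assms(2,4) escape] by blast
  have "n_filter n {a. sup a j \<in> F}" using assms(1) by (rule n_filter_sup_preimage)
  with X j have "sup (Inf_fin X) j \<in> F" by (auto simp: n_filter_def S_def)
  with \<open>j \<in> J\<close> assms(2,3) show "Inf_fin X \<in> - J"
    by (auto simp: lattice_ideal_def)
qed

theorem mainTheorem8:
  fixes F I :: "'a::distrib_lattice set" and n :: nat
  assumes "n \<ge> 1"
    and "n_filter n F"
    and "lattice_ideal I"
    and "F \<inter> I = {}"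
  shows "\<exists>G. prime_n_filter n G \<and> F \<subseteq> G \<and> G \<inter> I = {}"
proof -
  obtain J where J: "lattice_ideal J" "I \<subseteq> J" "J \<inter> F = {}"
    and maximal: "\<And>K. lattice_ideal K \<Longrightarrow> J \<subseteq> K \<Longrightarrow> K \<inter> F = {} \<Longrightarrow> K = J"
    using maximal_disjoint_ideal_exists[OF assms(3)] assms(4) by blast
  have "n_filter n (- J)"
  proof (cases "J = {}")
    case True
    then show ?thesis by (simp add: n_filter_def upset_def)
  next
    case False
    have "upset F" using assms(2) by (simp add: n_filter_def)
    from maximal_disjoint_ideal_escape[OF this J(1,3) maximal False]
    show ?thesis by (intro n_filter_Compl_ideal[OF assms(2) J(1,3) False]) blast
  qed
  moreover have "sup a b \<in> - J \<Longrightarrow> a \<in> - J \<or> b \<in> - J" for a b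
    using J(1) by (auto simp: lattice_ideal_def)
  ultimately have "prime_n_filter n (- J)" by (simp add: prime_n_filter_def)
  with J show ?thesis by blast
qed

end
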